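(* Let $\Omega\subseteq\mathbb{C}$ be an open disc centered at the origin, $M:\Omega\to\mathbb{C}^{n\times n}$ analytic with $M(0)$ invertible, written as $M(\lambda)=\sum_{i=1}^m M_if_i(\lambda)$ with $f_i$ scalar analytic on $\Omega$, and let $\mathcal{B}$ be the operator defined in the context. Let $N\ge 0$ be an integer, $Y\in\mathbb{C}^{n\times p}$, $S\in\mathbb{C}^{p\times p}$ invertible with $\sigma(S)\subset\Omega$, $c\in\mathbb{C}^p$ and $x_0,\ldots,x_{N-1}\in\mathbb{C}^n$. Suppose $$\varphi(\theta)=Y\exp_{N-1}(\theta S)c+\sum_{j=0}^{N-1}\theta^j x_j.$$ Then $$(\mathcal{B}\varphi)(\theta)=Y\exp_N(\theta S)c_+ +\sum_{j=0}^{N}\theta^j x_{+,j},$$ where $c_+=S^{-1}c$, $x_{+,j}=\frac{1}{j}x_{j-1}$ for $j=1,\ldots,N$, and $$x_{+,0}=-M(0)^{-1}\Big(\mathbb{M}_N(Y,S)c_+ +\sum_{i=1}^N M^{(i)}(0)x_{+,i}\Big).$$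
   Context: $B(\lambda)=M(0)^{-1}\frac{M(0)-M(\lambda)}{\lambda}$ for $\lambda\ne0$, extended analytically to $0$. $\mathcal{B}$ acts on smooth $\varphi:\mathbb{R}\to\mathbb{C}^n$ (for which the series below converges) by $(\mathcal{B}\varphi)(\theta)=\int_0^\theta\varphi(\hat\theta)d\hat\theta+\sum_{i=0}^\infty\frac{1}{i!}B^{(i)}(0)\varphi^{(i)}(0)$. For an integer $N\ge -1$, $\exp_N(\theta S):=\sum_{k=N+1}^\infty\frac{\theta^kS^k}{k!}$ (so $\exp_{-1}(\theta S)=\exp(\theta S)$), i.e. the remainder of the Taylor expansion of the exponential after order $N$. $\mathbb{M}(Y,S):=\sum_{i=1}^m M_iYf_i(S)$ and $\mathbb{M}_N(Y,S):=\sum_{k=N+1}^\infty\frac{1}{k!}M^{(k)}(0)YS^k=\mathbb{M}(Y,S)-\sum_{k=0}^N\frac{1}{k!}M^{(k)}(0)YS^k$. When $N=0$ the polynomial part of $\varphi$ is empty and the sum in $x_{+,0}$ is empty. *)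

theory Defs
  imports "HOL-Analysis.Analysis"
begin

text \<open>Complex matrices are rendered as \<open>complex^'q^'p\<close> (p rows, q columns),
  vectors as \<open>complex^'p\<close>; \<open>**\<close> is matrix product, \<open>*v\<close> matrix-vector product.\<close>

definition csm :: "complex \<Rightarrow> complex^'q^'p \<Rightarrow> complex^'q^'p" where
  "csm a A = (\<chi> i j. a * A$i$j)"

definition matpow :: "complex^'p^'p \<Rightarrow> nat \<Rightarrow> complex^'p^'p" where
  "matpow S k = (((**) S) ^^ k) (mat 1)"

definition mspectrum :: "complex^'p^'p \<Rightarrow> complex set" where
  "mspectrum S = {l. \<exists>v. v \<noteq> 0 \<and> S *v v = l *s v}"

definition mderiv :: "nat \<Rightarrow> (complex \<Rightarrow> complex^'q^'p) \<Rightarrow> complex \<Rightarrow> complex^'q^'p" where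
  "mderiv k F z = (\<chi> i j. (deriv ^^ k) (\<lambda>w. F w $ i $ j) z)"

definition vderiv :: "nat \<Rightarrow> (real \<Rightarrow> complex^'n) \<Rightarrow> real \<Rightarrow> complex^'n" where
  "vderiv k g = ((\<lambda>h t. vector_derivative h (at t)) ^^ k) g"

definition oint :: "(real \<Rightarrow> complex^'n) \<Rightarrow> real \<Rightarrow> complex^'n" where
  "oint g \<theta> = (if 0 \<le> \<theta> then integral {0..\<theta>} g else - integral {\<theta>..0} g)"

definition Bfun :: "(complex \<Rightarrow> complex^'n^'n) \<Rightarrow> complex \<Rightarrow> complex^'n^'n" where
  "Bfun M l = (if l = 0
      then Lim (at 0) (\<lambda>w. csm (1 / w) (matrix_inv (M 0) ** (M 0 - M w)))
      else csm (1 / l) (matrix_inv (M 0) ** (M 0 - M l)))"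

definition Bterm :: "(complex \<Rightarrow> complex^'n^'n) \<Rightarrow> (real \<Rightarrow> complex^'n) \<Rightarrow> nat \<Rightarrow> complex^'n" where
  "Bterm M g i = (1 / of_nat (fact i)) *s (mderiv i (Bfun M) 0 *v vderiv i g 0)"

definition Bop :: "(complex \<Rightarrow> complex^'n^'n) \<Rightarrow> (real \<Rightarrow> complex^'n) \<Rightarrow> real \<Rightarrow> complex^'n" where
  "Bop M g \<theta> = oint g \<theta> + (\<Sum>i. Bterm M g i)"

text \<open>\<open>exp_N(\<theta> S) c = \<Sum>_{k \<ge> N+1} \<theta>^k S^k c / k!\<close>, for integer \<open>N \<ge> -1\<close>.\<close>
definition expNv :: "int \<Rightarrow> complex \<Rightarrow> complex^'p^'p \<Rightarrow> complex^'p \<Rightarrow> complex^'p" where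
  "expNv N t S c = (\<Sum>k. if int k > N then (t ^ k / of_nat (fact k)) *s (matpow S k *v c) else 0)"

definition MMN :: "(complex \<Rightarrow> complex^'n^'n) \<Rightarrow> nat \<Rightarrow> complex^'p^'n \<Rightarrow> complex^'p^'p \<Rightarrow> complex^'p^'n" where
  "MMN M N Y S = (\<Sum>k. if k > N then csm (1 / of_nat (fact k)) (mderiv k M 0 ** Y ** matpow S k) else 0)"

end

theory Submission
  imports Defs "HOL-Complex_Analysis.Complex_Analysis"
begin

text \<open>The function \<open>\<phi>\<close> is an entire power series in \<open>\<theta>\<close> whose \<open>k\<close>-th coefficient is
  \<open>x\<^sub>k\<close> for \<open>k < N\<close> and \<open>Y S\<^sup>k c / k!\<close> for \<open>k \<ge> N\<close>. Integrating from 0 shifts the coefficients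
  by one, which produces \<open>Y exp\<^sub>N(\<theta>S) c\<^sub>+\<close> (using \<open>S c\<^sub>+ = c\<close>) and the polynomial part
  \<open>x\<^sub>+\<^sub>,\<^sub>j\<close>, \<open>j \<ge> 1\<close>. The Taylor coefficients of \<open>B\<close> are those of \<open>-M(0)\<^sup>-\<^sup>1 M\<close> shifted down
  by one, so the \<open>i\<close>-th term of the series in \<open>\<B>\<phi>\<close> is \<open>-M(0)\<^sup>-\<^sup>1 M\<^sup>(\<^sup>i\<^sup>+\<^sup>1\<^sup>)(0) v\<^sub>i / (i+1)\<close>,
  \<open>v\<^sub>i\<close> being the \<open>i\<close>-th coefficient of \<open>\<phi>\<close>;
  summing them gives \<open>x\<^sub>+\<^sub>,\<^sub>0\<close>. The series \<open>\<bbbM>\<^sub>N(Y,S)\<close> converges because \<open>|S\<^sup>k| \<le> C \<rho>\<^sup>k\<close>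
  for some \<open>\<rho> < r\<close>: the entries of \<open>(I - w S)\<^sup>-\<^sup>1\<close> are holomorphic on a disc of radius
  larger than \<open>1/r\<close>, since \<open>\<sigma>(S)\<close> lies in the open disc of radius \<open>r\<close>, and their Taylor
  coefficients are the entries of \<open>S\<^sup>k\<close>.\<close>

no_notation fps_nth (infixl \<open>$\<close> 75)

subsection \<open>Taylor coefficients\<close>

lemma higher_deriv_eq_fact_coeff:
  fixes a :: "nat \<Rightarrow> complex" and f :: "complex \<Rightarrow> complex"
  assumes d: "\<delta> > 0" and s: "\<And>z. norm z < \<delta> \<Longrightarrow> (\<lambda>k. a k * z^k) sums f z"
  shows "(deriv ^^ n) f 0 = fact n * a n"
proof -
  let ?F = "Abs_fps a"
  have r: "fps_conv_radius ?F \<ge> \<delta>" unfolding fps_conv_radius_def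
  proof (rule conv_radius_geI_ex)
    fix r :: real assume "0 < r" "ereal r < ereal \<delta>"
    then show "\<exists>z. norm z = r \<and> summable (\<lambda>n. fps_nth ?F n * z^n)"
      using s[of "of_real r"] by (intro exI[of _ "of_real r"]) (auto simp: summable_def)
  qed
  have "eventually (\<lambda>z. eval_fps ?F z = f z) (nhds 0)"
    unfolding eventually_nhds
    by (rule exI[of _ "ball 0 \<delta>"]) (use d s in \<open>auto simp: eval_fps_def sums_iff\<close>)
  moreover have "fps_conv_radius ?F > 0" using r d
    by (metis ereal_less(2) order_less_le_trans zero_ereal_def)
  ultimately have "f has_fps_expansion ?F" by (simp add: has_fps_expansion_def)
  from fps_nth_fps_expansion[OF this, of n] show ?thesis by simp
qed

lemma summable_norm_taylor_coeffs:
  fixes h :: "complex \<Rightarrow> complex"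
  assumes "h holomorphic_on ball 0 r" "0 \<le> \<rho>" "\<rho> < r"
  shows "summable (\<lambda>k. norm ((deriv ^^ k) h 0 / fact k) * \<rho>^k)"
proof -
  have "ereal \<rho> < ereal r" using assms by simp
  also have "ereal r \<le> fps_conv_radius (fps_expansion h 0)"
    by (rule conv_radius_fps_expansion) (use assms in simp)
  finally have "ereal (norm (of_real \<rho> :: complex)) < fps_conv_radius (fps_expansion h 0)"
    using assms(2) by simp
  from norm_summable_fps[OF this]
  have "summable (\<lambda>n. cmod ((deriv ^^ n) h 0 * of_real \<rho> ^ n / fact n))"
    by (simp add: fps_expansion_def)
  moreover have "(\<lambda>n. cmod ((deriv ^^ n) h 0 * of_real \<rho> ^ n / fact n))
     = (\<lambda>k. norm ((deriv ^^ k) h 0 / fact k) * \<rho>^k)"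
    by (rule ext) (use assms(2) in \<open>simp add: norm_mult norm_divide norm_power\<close>)
  ultimately show ?thesis by simp
qed

lemma summable_entire_power_series:
  fixes a :: "nat \<Rightarrow> complex"
  assumes "\<And>R. summable (\<lambda>k. norm (a k) * R^k)"
  shows "summable (\<lambda>k. a k * z^k)"
  by (rule summable_norm_cancel) (use assms[of "norm z"] in \<open>simp add: norm_mult norm_power\<close>)

lemma summable_integrated_coeffs:
  fixes a :: "nat \<Rightarrow> complex"
  assumes sa: "\<And>R. summable (\<lambda>k. norm (a k) * R^k)"
  shows "summable (\<lambda>k. norm (if k = 0 then 0 else a (k - 1) / of_nat k) * R^k)"
proof -
  have "summable (\<lambda>k. norm (a k / of_nat (Suc k)) * R ^ Suc k)"
  proof (rule summable_comparison_test[where g="\<lambda>k. \<bar>R\<bar> * (norm (a k) * \<bar>R\<bar>^k)"])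
    show "summable (\<lambda>k. \<bar>R\<bar> * (norm (a k) * \<bar>R\<bar>^k))"
      by (intro summable_mult sa)
    have "norm (norm (a k / of_nat (Suc k)) * R ^ Suc k) \<le> norm (a k) * \<bar>R\<bar> ^ Suc k" for k
    proof -
      have "norm (norm (a k / of_nat (Suc k)) * R ^ Suc k) = norm (a k) * \<bar>R\<bar> ^ Suc k / Suc k"
        by (simp add: norm_divide power_abs abs_mult del: of_nat_Suc power_Suc)
      also have "\<dots> \<le> norm (a k) * \<bar>R\<bar> ^ Suc k"
        using divide_left_mono[of 1 "real (Suc k)" "norm (a k) * \<bar>R\<bar> ^ Suc k"] by simp
      finally show ?thesis .
    qed
    then show "\<exists>N. \<forall>k\<ge>N. norm (norm (a k / of_nat (Suc k)) * R ^ Suc k) \<le> \<bar>R\<bar> * (norm (a k) * \<bar>R\<bar>^k)"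
      by (auto simp: mult_ac)
  qed
  then show ?thesis by (subst summable_Suc_iff[symmetric]) simp
qed

subsection \<open>Matrix powers and the spectrum\<close>

lemma matpow_0 [simp]: "matpow S 0 = mat 1"
  by (simp add: matpow_def)

lemma matpow_Suc: "matpow S (Suc k) = S ** matpow S k"
  by (simp add: matpow_def)

lemma matpow_Suc_right: "matpow S (Suc k) = matpow S k ** S"
proof (induction k)
  case 0 then show ?case by (simp add: matpow_Suc)
next
  case (Suc k)
  have "matpow S (Suc (Suc k)) = S ** (matpow S k ** S)" by (subst matpow_Suc) (simp only: Suc)
  also have "\<dots> = matpow S (Suc k) ** S" by (simp add: matpow_Suc matrix_mul_assoc)
  finally show ?case .
qed

lemma matrix_inv_right:
  fixes A :: "'a::semiring_1^'n^'n"
  assumes "invertible A"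
  shows "A ** matrix_inv A = mat 1"
proof -
  from assms obtain B where "A ** B = mat 1 \<and> B ** A = mat 1" unfolding invertible_def by blast
  then have "A ** matrix_inv A = mat 1 \<and> matrix_inv A ** A = mat 1"
    unfolding matrix_inv_def by (rule someI)
  then show ?thesis by simp
qed

lemma csm_matrix_vector_mult: "csm w S *v v = w *s (S *v v)"
  by (simp add: vec_eq_iff csm_def matrix_vector_mult_def sum_distrib_left mult_ac)

lemma norm_matrix_vector_mult_nth_le:
  fixes A :: "complex^'m^'n"
  shows "norm ((A *v u) $ j) \<le> (\<Sum>l\<in>UNIV. norm (A $ j $ l) * norm (u $ l))"
  unfolding matrix_vector_mult_def by (simp add: order_trans[OF norm_sum] norm_mult)

lemma vec_sumsI:
  fixes f :: "nat \<Rightarrow> 'a::real_normed_vector^'n"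
  assumes "\<And>i. (\<lambda>k. f k $ i) sums (a $ i)"
  shows "f sums a"
  using assms unfolding sums_def by (intro vec_tendstoI) (simp add: sum_component)

lemma matrix_vector_mult_sums:
  fixes f :: "nat \<Rightarrow> complex^'m^'n"
  assumes "f sums s"
  shows "(\<lambda>k. f k *v u) sums (s *v u)"
proof (rule vec_sumsI)
  fix a
  have "(\<lambda>k. f k $ a $ b) sums (s $ a $ b)" for b
    using sums_vec_nth[OF sums_vec_nth[OF assms, of a], of b] .
  then have "(\<lambda>k. \<Sum>b\<in>UNIV. f k $ a $ b * u $ b) sums (\<Sum>b\<in>UNIV. s $ a $ b * u $ b)"
    by (intro sums_sum sums_mult2) auto
  then show "(\<lambda>k. (f k *v u) $ a) sums ((s *v u) $ a)"
    by (simp add: matrix_vector_mult_def)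
qed

lemma matpow_entry_le_power:
  fixes S :: "complex^'p^'p"
  obtains K :: real where "K \<ge> 1" "\<And>m i j. norm (matpow S m $ i $ j) \<le> K ^ m"
proof -
  define K where "K = 1 + (\<Sum>i\<in>UNIV. \<Sum>l\<in>UNIV. norm (S $ i $ l))"
  have K1: "K \<ge> 1" unfolding K_def by (simp add: sum_nonneg)
  have row: "(\<Sum>l\<in>UNIV. norm (S $ i $ l)) \<le> K" for i
  proof -
    have "(\<Sum>l\<in>UNIV. norm (S $ i $ l)) \<le> (\<Sum>i\<in>UNIV. \<Sum>l\<in>UNIV. norm (S $ i $ l))"
      by (rule member_le_sum) (auto simp: sum_nonneg)
    then show ?thesis unfolding K_def by simp
  qed
  have "norm (matpow S m $ i $ j) \<le> K ^ m" for m i j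
  proof (induction m arbitrary: i j)
    case 0 then show ?case using K1 by (simp add: mat_def)
  next
    case (Suc m)
    have "norm (matpow S (Suc m) $ i $ j) = norm (\<Sum>l\<in>UNIV. S $ i $ l * matpow S m $ l $ j)"
      by (simp add: matpow_Suc matrix_matrix_mult_def)
    also have "\<dots> \<le> (\<Sum>l\<in>UNIV. norm (S $ i $ l) * K ^ m)"
      by (rule order_trans[OF norm_sum sum_mono]) (simp add: norm_mult mult_left_mono Suc)
    also have "\<dots> = (\<Sum>l\<in>UNIV. norm (S $ i $ l)) * K ^ m" by (simp add: sum_distrib_right)
    also have "\<dots> \<le> K * K ^ m" using row K1 by (intro mult_right_mono) auto
    finally show ?case by simp
  qed
  then show ?thesis using K1 that by blast
qed

lemma summable_neumann_entry:
  fixes S :: "complex^'p^'p"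
  assumes K: "K \<ge> 1" "\<And>m i j. norm (matpow S m $ i $ j) \<le> K ^ m"
    and w: "norm w < 1 / K"
  shows "summable (\<lambda>m. w^m * matpow S (m + d) $ k $ l)"
proof (rule summable_comparison_test[where g="\<lambda>m. K ^ d * (norm w * K)^m"])
  have "norm w * K < 1" using w K(1) by (simp add: field_simps)
  then show "summable (\<lambda>m. K ^ d * (norm w * K)^m)"
    using K(1) by (intro summable_mult summable_geometric) (simp add: abs_of_nonneg)
  have "norm (w^m * matpow S (m + d) $ k $ l) \<le> K ^ d * (norm w * K) ^ m" for m
  proof -
    have "norm (w^m * matpow S (m + d) $ k $ l) \<le> norm w ^ m * K ^ (m + d)"
      unfolding norm_mult norm_power by (intro mult_left_mono K(2)) auto
    then show ?thesis by (simp add: power_add power_mult_distrib mult_ac)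
  qed
  then show "\<exists>N. \<forall>m\<ge>N. norm (w^m * matpow S (m + d) $ k $ l) \<le> K ^ d * (norm w * K) ^ m"
    by blast
qed

lemma neumann_series_column:
  fixes S :: "complex^'p^'p"
  assumes K: "K \<ge> 1" "\<And>m i j. norm (matpow S m $ i $ j) \<le> K ^ m"
    and w: "norm w < 1 / K"
  shows "(mat 1 - csm w S) *v (\<chi> k. \<Sum>m. w^m * matpow S m $ k $ l) = axis l 1"
proof -
  define a where "a j m = w^m * matpow S m $ j $ l" for j m
  have sa: "summable (a j)" for j
    unfolding a_def using summable_neumann_entry[OF K w, of 0] by simp
  have sa1: "summable (\<lambda>m. w^m * matpow S (Suc m) $ i $ l)" for i
    using summable_neumann_entry[OF K w, of 1] by simp
  have "((mat 1 - csm w S) *v (\<chi> k. suminf (a k))) $ i = axis l 1 $ i" for i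
  proof -
    have "((mat 1 - csm w S) *v (\<chi> k. suminf (a k))) $ i
        = (\<Sum>j\<in>UNIV. ((if i = j then 1 else 0) - w * S $ i $ j) * suminf (a j))"
      by (simp add: matrix_vector_mult_def mat_def csm_def)
    also have "\<dots> = (\<Sum>j\<in>UNIV. (if i = j then suminf (a j) else 0)) - (\<Sum>j\<in>UNIV. w * (S $ i $ j * suminf (a j)))"
      by (subst sum_subtractf[symmetric]) (rule sum.cong, auto simp: algebra_simps)
    also have "\<dots> = suminf (a i) - w * (\<Sum>j\<in>UNIV. S $ i $ j * suminf (a j))"
      by (simp add: sum_distrib_left)
    also have "(\<Sum>j\<in>UNIV. S $ i $ j * suminf (a j)) = (\<Sum>j\<in>UNIV. \<Sum>m. S $ i $ j * a j m)"
      using sa by (simp add: suminf_mult)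
    also have "\<dots> = (\<Sum>m. \<Sum>j\<in>UNIV. S $ i $ j * a j m)"
      by (rule suminf_sum[symmetric]) (intro summable_mult sa)
    also have "\<dots> = (\<Sum>m. w^m * matpow S (Suc m) $ i $ l)"
      by (simp add: a_def matpow_Suc matrix_matrix_mult_def sum_distrib_left mult_ac)
    also have "w * \<dots> = (\<Sum>m. a i (Suc m))"
      using sa1 by (subst suminf_mult[symmetric]) (auto simp: a_def mult_ac)
    also have "\<dots> = suminf (a i) - a i 0"
      using sa by (rule suminf_split_head)
    finally show ?thesis by (simp add: a_def[of i 0] axis_def mat_def)
  qed
  then show ?thesis by (simp add: vec_eq_iff a_def[abs_def])
qed

lemma det_eq_0_imp_kernel:
  fixes A :: "'a::field^'n^'n"
  assumes "det A = 0"
  obtains v where "v \<noteq> 0" "A *v v = 0"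
proof -
  have "\<not> inj ((*v) A)"
    using det_nz_iff_inj_gen[of "(*v) A"] assms by simp
  then obtain x y where "x \<noteq> y" "A *v x = A *v y" unfolding inj_def by blast
  then have "x - y \<noteq> 0" "A *v (x - y) = 0" by (auto simp: matrix_vector_mult_diff_distrib)
  then show ?thesis using that by blast
qed

lemma det_holomorphic:
  fixes F :: "complex \<Rightarrow> complex^'n^'n"
  assumes "\<And>i j. (\<lambda>w. F w $ i $ j) holomorphic_on U"
  shows "(\<lambda>w. det (F w)) holomorphic_on U"
  unfolding det_def by (intro holomorphic_intros assms)

lemma holomorphic_one_minus_csm_entry: "(\<lambda>w. (mat 1 - csm w S) $ i $ j) holomorphic_on U"
proof -
  have "(mat 1 - csm w S) $ i $ j = (if i = j then 1 else 0) - w * S $ i $ j" for w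
    by (simp add: mat_def csm_def)
  then show ?thesis by (simp only:) (intro holomorphic_intros)
qed

lemma det_one_minus_csm_nonzero:
  fixes S :: "complex^'p^'p"
  assumes spec: "mspectrum S \<subseteq> ball 0 r" and r: "r > 0" and w: "norm w \<le> 1/r"
  shows "det (mat 1 - csm w S) \<noteq> 0"
proof
  assume "det (mat 1 - csm w S) = 0"
  then obtain v where v: "v \<noteq> 0" "(mat 1 - csm w S) *v v = 0" by (rule det_eq_0_imp_kernel)
  then have vv: "v = w *s (S *v v)"
    by (simp add: matrix_vector_mult_diff_rdistrib csm_matrix_vector_mult)
  have w0: "w \<noteq> 0" using v vv by auto
  have "S *v v = (1/w) *s v"
    using vv w0 by (metis divide_self_if vector_smult_assoc vector_smult_lid mult.commute nonzero_divide_eq_eq)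
  then have "1/w \<in> mspectrum S" unfolding mspectrum_def using v by blast
  then have "norm (1/w) < r" using spec by auto
  moreover have "norm (1/w) \<ge> r"
    using w w0 r by (simp add: norm_divide field_simps)
  ultimately show False by simp
qed

lemma det_one_minus_csm_nonzero_ball:
  fixes S :: "complex^'p^'p"
  assumes spec: "mspectrum S \<subseteq> ball 0 r" and r: "r > 0"
  obtains R where "R > 1/r" "\<And>w. norm w < R \<Longrightarrow> det (mat 1 - csm w S) \<noteq> 0"
proof -
  define D where "D w = det (mat 1 - csm w S)" for w
  have "D holomorphic_on UNIV"
    unfolding D_def[abs_def] by (intro det_holomorphic holomorphic_one_minus_csm_entry)
  then have "open {w. D w \<noteq> 0}"
    using holomorphic_on_imp_continuous_on by (intro open_Collect_neq) auto
  moreover have "cball 0 (1/r) \<subseteq> {w. D w \<noteq> 0}"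
    using det_one_minus_csm_nonzero[OF spec r] by (auto simp: D_def)
  ultimately obtain \<epsilon> where \<epsilon>: "\<epsilon> > 0" "(\<Union>x\<in>cball 0 (1/r). ball x \<epsilon>) \<subseteq> {w. D w \<noteq> 0}"
    using compact_subset_open_imp_ball_epsilon_subset[OF compact_cball] by metis
  have "D w \<noteq> 0" if "norm w < 1/r + \<epsilon>" for w
  proof (cases "norm w \<le> 1/r")
    case True then show ?thesis using det_one_minus_csm_nonzero[OF spec r True] by (simp add: D_def)
  next
    case False
    then have nw: "norm w > 1/r" "w \<noteq> 0" using r by auto
    txt \<open>The radial projection of \<open>w\<close> onto the circle of radius \<open>1/r\<close> is \<open>\<epsilon>\<close>-close to \<open>w\<close>.\<close>
    define x where "x = of_real (1/r / norm w) * w"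
    have "norm x = 1/r" unfolding x_def norm_mult norm_of_real using nw r by simp
    moreover have "dist x w = norm w - 1/r"
    proof -
      have "x - w = of_real (1/r / norm w - 1) * w" by (simp add: x_def algebra_simps)
      then have "dist x w = norm (of_real (1/r / norm w - 1) * w)" by (simp add: dist_norm)
      also have "\<dots> = (1 - 1/r / norm w) * norm w"
        unfolding norm_mult norm_of_real using nw r by (simp add: field_simps)
      also have "\<dots> = norm w - 1/r" using nw by (simp add: field_simps)
      finally show ?thesis .
    qed
    ultimately have "x \<in> cball 0 (1/r)" "w \<in> ball x \<epsilon>" using that by auto
    then show ?thesis using \<epsilon>(2) by blast
  qed
  then show ?thesis using that[of "1/r + \<epsilon>"] \<epsilon>(1) unfolding D_def by auto
qed

text \<open>By Cramer's rule the entries of \<open>(I - w S)\<^sup>-\<^sup>1\<close> are holomorphic wherever \<open>I - w S\<close> is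
  invertible, and near 0 they are the Neumann series \<open>\<Sum>\<^sub>m w\<^sup>m S\<^sup>m\<close>.\<close>

lemma matpow_entry_generating_function:
  fixes S :: "complex^'p^'p"
  assumes R: "R > 0" "\<And>w. norm w < R \<Longrightarrow> det (mat 1 - csm w S) \<noteq> 0"
  obtains g where "\<And>k l. g k l holomorphic_on ball 0 R"
    "\<And>m k l. (deriv ^^ m) (g k l) 0 = fact m * matpow S m $ k $ l"
proof -
  define A where "A w = mat 1 - csm w S" for w
  have Ahol: "(\<lambda>w. A w $ i $ j) holomorphic_on U" for i j U
    unfolding A_def by (rule holomorphic_one_minus_csm_entry)
  define g where "g k l w = det (\<chi> i j. if j = k then axis l 1 $ i else A w $ i $ j) / det (A w)"
    for k l w
  have hol: "g k l holomorphic_on ball 0 R" for k l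
  proof -
    have "(\<lambda>w. if j = k then axis l 1 $ i else A w $ i $ j) holomorphic_on ball 0 R" for i j
      by (cases "j = k") (simp_all add: Ahol)
    then have "(\<lambda>w. det (\<chi> i j. if j = k then axis l 1 $ i else A w $ i $ j)) holomorphic_on ball 0 R"
      by (intro det_holomorphic) simp
    moreover have "(\<lambda>w. det (A w)) holomorphic_on ball 0 R"
      by (rule det_holomorphic) (rule Ahol)
    ultimately show ?thesis
      unfolding g_def using R(2) unfolding A_def by (intro holomorphic_on_divide) auto
  qed
  obtain K where K: "K \<ge> 1" "\<And>m i j. norm (matpow S m $ i $ j) \<le> K ^ m"
    using matpow_entry_le_power[of S] by blast
  have series: "(\<lambda>m. matpow S m $ k $ l * w^m) sums g k l w" if "norm w < min (1/K) R" for k l w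
  proof -
    have w: "norm w < 1/K" "norm w < R" using that by auto
    have "A w *v (\<chi> k. \<Sum>m. w^m * matpow S m $ k $ l) = axis l 1"
      unfolding A_def by (rule neumann_series_column[OF K w(1)])
    then have "(\<chi> k. \<Sum>m. w^m * matpow S m $ k $ l)
        = (\<chi> k. det (\<chi> i j. if j = k then axis l 1 $ i else A w $ i $ j) / det (A w))"
      using cramer[of "A w"] R(2)[OF w(2)] unfolding A_def by blast
    then have "(\<Sum>m. w^m * matpow S m $ k $ l) = g k l w"
      unfolding g_def by (simp add: vec_eq_iff)
    moreover have "summable (\<lambda>m. w^m * matpow S m $ k $ l)"
      using summable_neumann_entry[OF K w(1), of 0 k l] by simp
    ultimately have "(\<lambda>m. w^m * matpow S m $ k $ l) sums g k l w"
      by (simp add: summable_sums_iff)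
    then show ?thesis by (simp add: mult.commute)
  qed
  have "min (1/K) R > 0" using K(1) R(1) by simp
  then have "(deriv ^^ m) (g k l) 0 = fact m * matpow S m $ k $ l" for m k l
    by (rule higher_deriv_eq_fact_coeff) (rule series)
  with hol show ?thesis by (rule that)
qed

lemma matpow_entry_le_geometric:
  fixes S :: "complex^'p^'p"
  assumes spec: "mspectrum S \<subseteq> ball 0 r" and r: "r > 0"
  obtains \<rho> C where "0 < \<rho>" "\<rho> < r" "\<And>m i j. norm (matpow S m $ i $ j) \<le> C * \<rho>^m"
proof -
  obtain R where R: "R > 1/r" "\<And>w. norm w < R \<Longrightarrow> det (mat 1 - csm w S) \<noteq> 0"
    using det_one_minus_csm_nonzero_ball[OF spec r] by blast
  have "R > 0" using R(1) r by (meson less_trans zero_less_divide_1_iff)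
  obtain g where hol: "\<And>k l. g k l holomorphic_on ball 0 R"
    and coef: "\<And>m k l. (deriv ^^ m) (g k l) 0 = fact m * matpow S m $ k $ l"
    using matpow_entry_generating_function[OF \<open>R > 0\<close> R(2)] by blast
  define w0 where "w0 = (1/r + R) / 2"
  have w0: "w0 > 1/r" "w0 < R" "w0 > 0" unfolding w0_def using R(1) r by (auto simp: field_simps)
  define Cf where "Cf k l = (\<Sum>m. norm (matpow S m $ k $ l) * w0^m)" for k l
  have sm: "summable (\<lambda>m. norm (matpow S m $ k $ l) * w0^m)" for k l
    using summable_norm_taylor_coeffs[OF hol, of w0 k l] w0 by (simp add: coef norm_mult)
  have Cf: "norm (matpow S m $ k $ l) * w0^m \<le> Cf k l" for m k l
    using sum_le_suminf[OF sm[of k l], of "{m}"] w0(3) unfolding Cf_def by simp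
  have Cf0: "Cf k l \<ge> 0" for k l
    unfolding Cf_def using sm w0(3) by (intro suminf_nonneg) auto
  define C where "C = (\<Sum>k\<in>UNIV. \<Sum>l\<in>UNIV. Cf k l)"
  have CfC: "Cf k l \<le> C" for k l
  proof -
    have "Cf k l \<le> (\<Sum>l\<in>UNIV. Cf k l)" by (rule member_le_sum) (auto simp: Cf0)
    also have "\<dots> \<le> C" unfolding C_def by (rule member_le_sum) (auto simp: Cf0 sum_nonneg)
    finally show ?thesis .
  qed
  show ?thesis
  proof
    show "0 < 1/w0" "1/w0 < r" using w0 r by (auto simp: field_simps)
    fix m i j
    have "norm (matpow S m $ i $ j) \<le> Cf i j / w0^m"
      using Cf[of m i j] w0 by (simp add: field_simps)
    also have "\<dots> \<le> C / w0^m" using CfC w0 by (simp add: divide_right_mono)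
    finally show "norm (matpow S m $ i $ j) \<le> C * (1/w0)^m" by (simp add: power_one_over)
  qed
qed

subsection \<open>Taylor coefficients of \<open>B\<close>\<close>

lemma holomorphic_entries_csm_sum:
  fixes M :: "complex \<Rightarrow> complex^'q^'p"
  assumes "\<And>i. i \<in> I \<Longrightarrow> f i analytic_on U"
    and "\<And>l. l \<in> U \<Longrightarrow> M l = (\<Sum>i\<in>I. csm (f i l) (Ms i))"
  shows "(\<lambda>w. M w $ a $ b) holomorphic_on U"
proof -
  have "(\<lambda>w. \<Sum>i\<in>I. f i w * Ms i $ a $ b) holomorphic_on U"
    using assms(1) by (intro holomorphic_intros analytic_imp_holomorphic)
  then show ?thesis
    by (rule holomorphic_transform) (simp add: assms(2) csm_def)
qed

lemma Bfun_0:
  fixes M :: "complex \<Rightarrow> complex^'n^'n"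
  assumes r: "r > 0" and hol: "\<And>a b. (\<lambda>w. M w $ a $ b) holomorphic_on ball 0 r"
  shows "Bfun M 0 = - (matrix_inv (M 0) ** mderiv 1 M 0)"
proof -
  define Mi where "Mi = matrix_inv (M 0)"
  define F where "F w = csm (1 / w) (Mi ** (M 0 - M w))" for w
  have "(F \<longlongrightarrow> - (Mi ** mderiv 1 M 0)) (at 0)"
  proof (intro vec_tendstoI)
    fix a b
    have "((\<lambda>w. (M 0 $ k $ b - M w $ k $ b) / w) \<longlongrightarrow> - deriv (\<lambda>w. M w $ k $ b) 0) (at 0)" for k
    proof -
      have "DERIV (\<lambda>w. M w $ k $ b) 0 :> deriv (\<lambda>w. M w $ k $ b) 0"
        using hol r by (intro holomorphic_derivI[of _ "ball 0 r"]) auto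
      then have "((\<lambda>w. - ((M w $ k $ b - M 0 $ k $ b) / w)) \<longlongrightarrow> - deriv (\<lambda>w. M w $ k $ b) 0) (at 0)"
        unfolding DERIV_def by (intro tendsto_minus) simp
      moreover have "- ((M w $ k $ b - M 0 $ k $ b) / w) = (M 0 $ k $ b - M w $ k $ b) / w" for w
        by (metis minus_diff_eq divide_minus_left)
      ultimately show ?thesis by simp
    qed
    then have "((\<lambda>w. \<Sum>k\<in>UNIV. Mi $ a $ k * ((M 0 $ k $ b - M w $ k $ b) / w))
        \<longlongrightarrow> (\<Sum>k\<in>UNIV. Mi $ a $ k * - deriv (\<lambda>w. M w $ k $ b) 0)) (at 0)"
      by (intro tendsto_intros)
    moreover have "F w $ a $ b = (\<Sum>k\<in>UNIV. Mi $ a $ k * ((M 0 $ k $ b - M w $ k $ b) / w))" for w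
      by (simp add: F_def csm_def matrix_matrix_mult_def sum_distrib_left mult_ac)
    ultimately show "((\<lambda>w. F w $ a $ b) \<longlongrightarrow> (- (Mi ** mderiv 1 M 0)) $ a $ b) (at 0)"
      by (simp add: matrix_matrix_mult_def mderiv_def sum_negf)
  qed
  then show ?thesis
    unfolding Bfun_def F_def Mi_def by (simp add: tendsto_Lim)
qed

lemma Bfun_entry_sums:
  fixes M :: "complex \<Rightarrow> complex^'n^'n"
  assumes r: "r > 0" and hol: "\<And>a b. (\<lambda>w. M w $ a $ b) holomorphic_on ball 0 r"
    and w: "norm w < r"
  shows "(\<lambda>j. - (\<Sum>k\<in>UNIV. matrix_inv (M 0) $ a $ k *
            ((deriv ^^ Suc j) (\<lambda>w. M w $ k $ b) 0 / fact (Suc j))) * w^j)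
          sums Bfun M w $ a $ b"
proof -
  define Mi where "Mi = matrix_inv (M 0)"
  define h where "h w = (\<Sum>k\<in>UNIV. Mi $ a $ k * M w $ k $ b)" for w
  define \<alpha> where "\<alpha> j = (\<Sum>k\<in>UNIV. Mi $ a $ k * ((deriv ^^ j) (\<lambda>w. M w $ k $ b) 0 / fact j))" for j
  have "(\<lambda>j. \<alpha> j * w^j) sums h w"
  proof -
    have "(\<lambda>j. (deriv ^^ j) (\<lambda>w. M w $ k $ b) 0 / fact j * (w - 0)^j) sums M w $ k $ b" for k
      by (rule holomorphic_power_series[OF hol]) (use w in simp)
    then have "(\<lambda>j. \<Sum>k\<in>UNIV. Mi $ a $ k * ((deriv ^^ j) (\<lambda>w. M w $ k $ b) 0 / fact j * w^j)) sums h w"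
      unfolding h_def by (intro sums_sum sums_mult) simp
    moreover have "(\<Sum>k\<in>UNIV. Mi $ a $ k * ((deriv ^^ j) (\<lambda>w. M w $ k $ b) 0 / fact j * w^j)) = \<alpha> j * w^j" for j
      unfolding \<alpha>_def sum_distrib_right by (intro sum.cong refl) (simp add: mult_ac)
    ultimately show ?thesis by simp
  qed
  then have hs: "(\<lambda>j. \<alpha> (Suc j) * w^(Suc j)) sums (h w - \<alpha> 0)"
    by (subst sums_Suc_iff) simp
  have "(\<lambda>j. - \<alpha> (Suc j) * w^j) sums Bfun M w $ a $ b"
  proof (cases "w = 0")
    case True
    have "Bfun M 0 $ a $ b = - \<alpha> 1"
      by (simp add: Bfun_0[OF r hol] matrix_matrix_mult_def mderiv_def \<alpha>_def Mi_def sum_negf)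
    then show ?thesis using True powser_sums_zero[where a="\<lambda>j. - \<alpha> (Suc j)"] by simp
  next
    case False
    have "(\<lambda>j. (-1/w) * (\<alpha> (Suc j) * w^(Suc j))) sums ((-1/w) * (h w - \<alpha> 0))"
      using hs by (intro sums_mult)
    moreover have "(\<lambda>j. (-1/w) * (\<alpha> (Suc j) * w^(Suc j))) = (\<lambda>j. - \<alpha> (Suc j) * w^j)"
      using False by (auto simp: field_simps)
    moreover have "(-1/w) * (h w - \<alpha> 0) = Bfun M w $ a $ b"
      using False by (simp add: Bfun_def csm_def matrix_matrix_mult_def h_def \<alpha>_def Mi_def
          sum_subtractf right_diff_distrib field_simps)
    ultimately show ?thesis by simp
  qed
  then show ?thesis by (simp add: \<alpha>_def Mi_def)
qed

lemma mderiv_Bfun_0: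
  fixes M :: "complex \<Rightarrow> complex^'n^'n"
  assumes r: "r > 0" and hol: "\<And>a b. (\<lambda>w. M w $ a $ b) holomorphic_on ball 0 r"
  shows "mderiv i (Bfun M) 0 = - csm (1 / of_nat (Suc i)) (matrix_inv (M 0) ** mderiv (Suc i) M 0)"
proof -
  have ff: "fact i / fact (Suc i) = (1 / of_nat (Suc i) :: complex)"
    by (simp add: divide_simps del: of_nat_Suc)
  have "(deriv ^^ i) (\<lambda>w. Bfun M w $ a $ b) 0
      = - (fact i / fact (Suc i)) * (\<Sum>k\<in>UNIV. matrix_inv (M 0) $ a $ k * (deriv ^^ Suc i) (\<lambda>w. M w $ k $ b) 0)"
    for a b
    by (subst higher_deriv_eq_fact_coeff[OF r Bfun_entry_sums[OF r hol]])
       (simp_all add: sum_divide_distrib[symmetric] del: fact_Suc)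
  then show ?thesis
    unfolding ff by (simp add: vec_eq_iff mderiv_def csm_def matrix_matrix_mult_def del: fact_Suc)
qed

subsection \<open>Vector-valued power series of a real variable\<close>

definition vec_power_series :: "(nat \<Rightarrow> complex^'n) \<Rightarrow> real \<Rightarrow> complex^'n" where
  "vec_power_series v t = (\<chi> j. \<Sum>k. v k $ j * of_real t ^ k)"

lemma bounded_linear_axis: "bounded_linear (axis j :: complex \<Rightarrow> complex^'n)"
proof (rule bounded_linear_intro[where K=1])
  show "axis j (x + y) = axis j x + axis j y" for x y :: complex
    by (simp add: axis_def vec_eq_iff)
  show "axis j (r *\<^sub>R x) = r *\<^sub>R axis j x" for r and x :: complex
    by (simp add: axis_def vec_eq_iff)
  show "norm (axis j x) \<le> norm x * 1" for x :: complex
  proof -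
    have "norm (axis j x) \<le> (\<Sum>k\<in>UNIV. norm (axis j x $ k))"
      unfolding norm_vec_def by (rule L2_set_le_sum) simp
    also have "\<dots> = norm x"
    proof -
      have "norm (axis j x $ k) = (if k = j then norm x else 0)" for k
        by (simp add: axis_def)
      then show ?thesis by simp
    qed
    finally show ?thesis by simp
  qed
qed

lemma has_vector_derivative_vec_of_entire:
  fixes H :: "'n::finite \<Rightarrow> complex \<Rightarrow> complex"
  assumes "\<And>j. H j holomorphic_on UNIV"
  shows "((\<lambda>t. \<chi> j. H j (of_real t)) has_vector_derivative (\<chi> j. deriv (H j) (of_real t))) (at t)"
proof -
  have d: "(H j has_field_derivative deriv (H j) (of_real t)) (at (of_real t))" for j
    using assms by (intro holomorphic_derivI[of _ UNIV]) auto
  have vec: "(\<chi> j. g j) = (\<Sum>j\<in>UNIV. axis j (g j))" for g :: "'n \<Rightarrow> complex"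
    by (simp add: vec_eq_iff axis_def)
  have "((\<lambda>t. \<Sum>j\<in>UNIV. axis j (H j (of_real t))) has_vector_derivative
          (\<Sum>j\<in>UNIV. axis j (deriv (H j) (of_real t)))) (at t)"
    by (intro has_vector_derivative_sum bounded_linear.has_vector_derivative[OF bounded_linear_axis]
        has_vector_derivative_real_field d)
  then show ?thesis by (simp only: vec)
qed

lemma vderiv_vec_of_entire:
  fixes G :: "'n::finite \<Rightarrow> complex \<Rightarrow> complex"
  assumes hol: "\<And>j. G j holomorphic_on UNIV"
  shows "vderiv i (\<lambda>t. \<chi> j. G j (of_real t)) = (\<lambda>t. \<chi> j. (deriv ^^ i) (G j) (of_real t))"
proof (induction i)
  case 0 then show ?case by (simp add: vderiv_def)
next
  case (Suc i)
  have "(deriv ^^ i) (G j) holomorphic_on UNIV" for j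
    by (rule holomorphic_higher_deriv[OF hol]) simp
  then have d: "((\<lambda>t. \<chi> j. (deriv ^^ i) (G j) (of_real t)) has_vector_derivative
      (\<chi> j. (deriv ^^ Suc i) (G j) (of_real t))) (at t)" for t
    using has_vector_derivative_vec_of_entire[of "\<lambda>j. (deriv ^^ i) (G j)"] by simp
  have "vderiv (Suc i) (\<lambda>t. \<chi> j. G j (of_real t))
      = (\<lambda>t. vector_derivative (vderiv i (\<lambda>t. \<chi> j. G j (of_real t))) (at t))"
    by (simp add: vderiv_def)
  also have "\<dots> = (\<lambda>t. \<chi> j. (deriv ^^ Suc i) (G j) (of_real t))"
    unfolding Suc.IH by (intro ext vector_derivative_at d)
  finally show ?case .
qed

lemma oint_eq_antiderivative:
  fixes \<Phi> :: "real \<Rightarrow> complex^'n"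
  assumes d: "\<And>t. (\<Phi> has_vector_derivative g t) (at t)"
  shows "oint g \<theta> = \<Phi> \<theta> - \<Phi> 0"
proof (cases "0 \<le> \<theta>")
  case True
  have "(g has_integral (\<Phi> \<theta> - \<Phi> 0)) {0..\<theta>}"
    by (rule fundamental_theorem_of_calculus[OF True]) (auto intro: has_vector_derivative_at_within d)
  then show ?thesis using True by (simp add: oint_def integral_unique)
next
  case False
  have "(g has_integral (\<Phi> 0 - \<Phi> \<theta>)) {\<theta>..0}"
    by (rule fundamental_theorem_of_calculus) (use False in \<open>auto intro: has_vector_derivative_at_within d\<close>)
  then show ?thesis using False by (simp add: oint_def integral_unique)
qed

lemma entire_power_series_has_field_derivative:
  fixes a :: "nat \<Rightarrow> complex"
  assumes "\<And>R. summable (\<lambda>k. norm (a k) * R^k)"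
  shows "((\<lambda>z. \<Sum>k. a k * z^k) has_field_derivative (\<Sum>k. diffs a k * z^k)) (at z)"
  by (rule termdiffs_strong_converges_everywhere) (rule summable_entire_power_series[OF assms])

lemma vderiv_vec_power_series_0:
  assumes sv: "\<And>j R. summable (\<lambda>k. norm (v k $ j) * R^k)"
  shows "vderiv i (vec_power_series v) 0 = fact i *s v i"
proof -
  define G where "G j z = (\<Sum>k. v k $ j * z^k)" for j z
  have "G j holomorphic_on UNIV" for j
    using entire_power_series_has_field_derivative[OF sv]
    by (auto simp: holomorphic_on_open G_def[abs_def])
  then have "vderiv i (vec_power_series v) 0 = (\<chi> j. (deriv ^^ i) (G j) 0)"
    using vderiv_vec_of_entire[of G i] by (simp add: vec_power_series_def[abs_def] G_def)
  moreover have "(deriv ^^ i) (G j) 0 = fact i * v i $ j" for j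
    using summable_entire_power_series[OF sv]
    by (intro higher_deriv_eq_fact_coeff[of 1]) (auto simp: G_def summable_sums)
  ultimately show ?thesis by (simp add: vec_eq_iff)
qed

lemma oint_vec_power_series:
  assumes sv: "\<And>j R. summable (\<lambda>k. norm (v k $ j) * R^k)"
  shows "oint (vec_power_series v) \<theta>
       = vec_power_series (\<lambda>k. if k = 0 then 0 else (1 / of_nat k) *s v (k - 1)) \<theta>"
proof -
  define c where "c j k = (if k = 0 then 0 else v (k - 1) $ j / of_nat k)" for j k
  define G where "G j z = (\<Sum>k. c j k * z^k)" for j z
  have sc: "summable (\<lambda>k. norm (c j k) * R^k)" for j R
    unfolding c_def by (rule summable_integrated_coeffs[OF sv])
  have "diffs (c j) = (\<lambda>k. v k $ j)" for j
    by (rule ext) (simp add: diffs_def c_def del: of_nat_Suc)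
  then have dG: "(G j has_field_derivative (\<Sum>k. v k $ j * z^k)) (at z)" for j z
    using entire_power_series_has_field_derivative[OF sc] by (simp add: G_def[abs_def])
  then have "G j holomorphic_on UNIV" for j
    by (auto simp: holomorphic_on_open)
  moreover have "deriv (G j) z = (\<Sum>k. v k $ j * z^k)" for j z
    using dG by (rule DERIV_imp_deriv)
  ultimately have "((\<lambda>t. \<chi> j. G j (of_real t)) has_vector_derivative vec_power_series v t) (at t)" for t
    using has_vector_derivative_vec_of_entire[of G t] by (simp add: vec_power_series_def)
  then have "oint (vec_power_series v) \<theta> = (\<chi> j. G j (of_real \<theta>)) - (\<chi> j. G j (of_real 0))"
    by (rule oint_eq_antiderivative)
  also have "(\<chi> j. G j (of_real 0)) = 0"
    by (simp add: vec_eq_iff G_def c_def)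
  moreover have "(if k = 0 then 0 else (1 / of_nat k) *s v (k - 1)) $ j = c j k" for j k
    by (simp add: c_def)
  ultimately show ?thesis
    by (simp add: vec_power_series_def G_def)
qed

lemma vec_power_series_eqI:
  assumes "(\<lambda>k. (of_real t ^ k) *s v k) sums s"
  shows "vec_power_series v t = s"
proof -
  have "(\<lambda>k. v k $ j * of_real t ^ k) sums s $ j" for j
    using sums_vec_nth[OF assms, of j] by (simp add: mult.commute)
  then show ?thesis by (simp add: vec_power_series_def vec_eq_iff sums_iff)
qed

subsection \<open>The truncated exponential\<close>

lemma norm_matpow_mult_vec_nth_le:
  fixes S :: "complex^'p^'p"
  assumes K: "\<And>m i j. norm (matpow S m $ i $ j) \<le> K ^ m"
  shows "norm ((matpow S k *v u) $ l) \<le> (\<Sum>m\<in>UNIV. norm (u $ m)) * K ^ k"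
proof -
  have "norm ((matpow S k *v u) $ l) \<le> (\<Sum>m\<in>UNIV. norm (matpow S k $ l $ m) * norm (u $ m))"
    by (rule norm_matrix_vector_mult_nth_le)
  also have "\<dots> \<le> (\<Sum>m\<in>UNIV. K ^ k * norm (u $ m))"
    by (intro sum_mono mult_right_mono K) auto
  finally show ?thesis by (simp add: sum_distrib_left mult_ac)
qed

lemma sums_expNv:
  fixes S :: "complex^'p^'p"
  shows "(\<lambda>k. if int k > N then (t ^ k / of_nat (fact k)) *s (matpow S k *v u) else 0)
           sums expNv N t S u"
proof -
  obtain K where K: "K \<ge> 1" "\<And>m i j. norm (matpow S m $ i $ j) \<le> K ^ m"
    using matpow_entry_le_power[of S] by blast
  define f where "f k = (if int k > N then (t ^ k / of_nat (fact k)) *s (matpow S k *v u) else 0)" for k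
  define U where "U = (\<Sum>m\<in>UNIV. norm (u $ m))"
  have "summable (\<lambda>k. f k $ l)" for l
  proof (rule summable_comparison_test[where g="\<lambda>k. U * (inverse (fact k) * (norm t * K)^k)"])
    show "summable (\<lambda>k. U * (inverse (fact k) * (norm t * K)^k))"
      by (intro summable_mult summable_exp)
    have "norm (f k $ l) \<le> norm t ^ k / fact k * (U * K^k)" for k
      using norm_matpow_mult_vec_nth_le[OF K(2), of k u l] K(1)
      by (auto simp: f_def U_def norm_mult norm_divide norm_power sum_nonneg
          intro!: divide_right_mono mult_left_mono)
    then show "\<exists>N. \<forall>k\<ge>N. norm (f k $ l) \<le> U * (inverse (fact k) * (norm t * K)^k)"
      by (simp add: field_simps power_mult_distrib)
  qed
  then have "f sums (\<chi> l. \<Sum>k. f k $ l)"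
    by (intro vec_sumsI) (simp add: summable_sums)
  moreover have "expNv N t S u = suminf f" unfolding expNv_def f_def ..
  ultimately show ?thesis unfolding f_def[symmetric] by (simp add: sums_iff)
qed

definition expN_poly_coeff ::
  "nat \<Rightarrow> complex^'p^'n \<Rightarrow> complex^'p^'p \<Rightarrow> complex^'p \<Rightarrow> (nat \<Rightarrow> complex^'n) \<Rightarrow> nat \<Rightarrow> complex^'n"
  where "expN_poly_coeff N Y S c x k =
    (if k < N then x k else (1 / of_nat (fact k)) *s (Y *v (matpow S k *v c)))"

lemma summable_expN_poly_coeff:
  "summable (\<lambda>k. norm (expN_poly_coeff N Y S c x k $ j) * R^k)"
proof -
  obtain K where K: "K \<ge> 1" "\<And>m i j. norm (matpow S m $ i $ j) \<le> K ^ m"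
    using matpow_entry_le_power[of S] by blast
  define Q where "Q = (\<Sum>l\<in>UNIV. norm (Y $ j $ l)) * (\<Sum>m\<in>UNIV. norm (c $ m))"
  have bnd: "norm ((Y *v (matpow S k *v c)) $ j) \<le> Q * K^k" for k
  proof -
    have "norm ((Y *v (matpow S k *v c)) $ j) \<le> (\<Sum>l\<in>UNIV. norm (Y$j$l) * norm ((matpow S k *v c) $ l))"
      by (rule norm_matrix_vector_mult_nth_le)
    also have "\<dots> \<le> (\<Sum>l\<in>UNIV. norm (Y$j$l) * ((\<Sum>m\<in>UNIV. norm (c $ m)) * K^k))"
      by (intro sum_mono mult_left_mono norm_matpow_mult_vec_nth_le K(2)) auto
    also have "\<dots> = Q * K^k" by (simp add: Q_def sum_distrib_right mult.assoc)
    finally show ?thesis .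
  qed
  show ?thesis
  proof (rule summable_comparison_test[where g="\<lambda>k. Q * (inverse (fact k) * (\<bar>R\<bar> * K)^k)"])
    show "summable (\<lambda>k. Q * (inverse (fact k) * (\<bar>R\<bar> * K)^k))"
      by (intro summable_mult summable_exp)
    have "norm (norm (expN_poly_coeff N Y S c x k $ j) * R^k) \<le> Q * (inverse (fact k) * (\<bar>R\<bar> * K)^k)"
      if "N \<le> k" for k
    proof -
      have "norm (norm (expN_poly_coeff N Y S c x k $ j) * R^k)
          = norm ((Y *v (matpow S k *v c)) $ j) / fact k * \<bar>R\<bar>^k"
        using that by (simp add: expN_poly_coeff_def norm_mult norm_divide power_abs abs_mult)
      also have "\<dots> \<le> Q * K^k / fact k * \<bar>R\<bar>^k"
        by (intro mult_right_mono divide_right_mono bnd) auto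
      finally show ?thesis by (simp add: field_simps power_mult_distrib)
    qed
    then show "\<exists>N'. \<forall>k\<ge>N'. norm (norm (expN_poly_coeff N Y S c x k $ j) * R^k)
        \<le> Q * (inverse (fact k) * (\<bar>R\<bar> * K)^k)"
      by blast
  qed
qed

lemma expNv_plus_poly_eq_vec_power_series:
  "Y *v expNv (int N - 1) (of_real \<theta>) S c + (\<Sum>j<N. (of_real \<theta> ^ j) *s x j)
     = vec_power_series (expN_poly_coeff N Y S c x) \<theta>"
proof (rule sym, rule vec_power_series_eqI)
  define t where "t = complex_of_real \<theta>"
  have "(\<lambda>k. Y *v (if int k > int N - 1 then (t^k / of_nat (fact k)) *s (matpow S k *v c) else 0)
           + (if k \<in> {..<N} then (t ^ k) *s x k else 0))
        sums (Y *v expNv (int N - 1) t S c + (\<Sum>j<N. (t ^ j) *s x j))"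
    by (intro sums_add sums_If_finite_set finite_lessThan
        bounded_linear.sums[OF matrix_vector_mul_bounded_linear] sums_expNv)
  moreover have "Y *v (if int k > int N - 1 then (t^k / of_nat (fact k)) *s (matpow S k *v c) else 0)
           + (if k \<in> {..<N} then (t ^ k) *s x k else 0) = (t ^ k) *s expN_poly_coeff N Y S c x k" for k
    by (cases "N \<le> k") (auto simp: expN_poly_coeff_def vector_scalar_commute vector_smult_assoc)
  ultimately show "(\<lambda>k. (of_real \<theta> ^ k) *s expN_poly_coeff N Y S c x k)
      sums (Y *v expNv (int N - 1) (of_real \<theta>) S c + (\<Sum>j<N. (of_real \<theta> ^ j) *s x j))"
    by (simp add: t_def)
qed

lemma oint_expN_poly:
  assumes cp: "S *v cp = c"
  shows "oint (vec_power_series (expN_poly_coeff N Y S c x)) \<theta>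
       = Y *v expNv (int N) (of_real \<theta>) S cp
         + (\<Sum>j\<in>{1..N}. (of_real \<theta> ^ j) *s ((1 / of_nat j) *s x (j - 1)))"
proof -
  define t where "t = complex_of_real \<theta>"
  define w where "w k = (if k = 0 then 0 else (1 / of_nat k) *s expN_poly_coeff N Y S c x (k - 1))" for k
  have "(\<lambda>k. Y *v (if int k > int N then (t^k / of_nat (fact k)) *s (matpow S k *v cp) else 0)
           + (if k \<in> {1..N} then (t ^ k) *s ((1 / of_nat k) *s x (k - 1)) else 0))
        sums (Y *v expNv (int N) t S cp + (\<Sum>j\<in>{1..N}. (t ^ j) *s ((1 / of_nat j) *s x (j - 1))))"
    by (intro sums_add sums_If_finite_set finite_atLeastAtMost
        bounded_linear.sums[OF matrix_vector_mul_bounded_linear] sums_expNv)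
  moreover have "Y *v (if int k > int N then (t^k / of_nat (fact k)) *s (matpow S k *v cp) else 0)
           + (if k \<in> {1..N} then (t ^ k) *s ((1 / of_nat k) *s x (k - 1)) else 0) = (t ^ k) *s w k" for k
  proof (cases k)
    case (Suc i)
    have "matpow S (Suc i) *v cp = matpow S i *v c"
      by (simp add: matpow_Suc_right matrix_vector_mul_assoc[symmetric] cp)
    moreover have "t ^ Suc i / of_nat (fact (Suc i)) = t ^ Suc i * (1 / of_nat (Suc i) * (1 / of_nat (fact i)))"
      by (simp add: field_simps)
    ultimately show ?thesis
      using Suc by (cases "N \<le> i")
        (auto simp: w_def expN_poly_coeff_def vector_scalar_commute vector_smult_assoc
          simp del: of_nat_Suc fact_Suc power_Suc)
  qed (simp add: w_def)
  ultimately have "vec_power_series w \<theta>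
      = Y *v expNv (int N) t S cp + (\<Sum>j\<in>{1..N}. (t ^ j) *s ((1 / of_nat j) *s x (j - 1)))"
    by (intro vec_power_series_eqI) (simp add: t_def)
  then show ?thesis
    unfolding w_def t_def by (subst oint_vec_power_series) (simp_all add: summable_expN_poly_coeff)
qed

subsection \<open>The series part of \<open>\<B>\<phi>\<close>\<close>

lemma Bterm_vec_power_series:
  assumes r: "r > 0" and hol: "\<And>a b. (\<lambda>w. M w $ a $ b) holomorphic_on ball 0 r"
    and sv: "\<And>j R. summable (\<lambda>k. norm (v k $ j) * R^k)"
  shows "Bterm M (vec_power_series v) i
       = - (matrix_inv (M 0) *v ((1 / of_nat (Suc i)) *s (mderiv (Suc i) M 0 *v v i)))"
proof -
  have neg: "(- A) *v u = - (A *v u)" for A :: "complex^'n^'n" and u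
    by (simp add: vec_eq_iff matrix_vector_mult_def sum_negf)
  have "Bterm M (vec_power_series v) i = (1 / fact i) *s ((- csm (1 / of_nat (Suc i))
      (matrix_inv (M 0) ** mderiv (Suc i) M 0)) *v (fact i *s v i))"
    unfolding Bterm_def vderiv_vec_power_series_0[OF sv] mderiv_Bfun_0[OF r hol] by simp
  also have "\<dots> = - (((1 / fact i) * (1 / of_nat (Suc i) * fact i)) *s
      (matrix_inv (M 0) *v (mderiv (Suc i) M 0 *v v i)))"
    by (simp add: neg csm_matrix_vector_mult vector_scalar_commute matrix_vector_mul_assoc[symmetric]
        vector_smult_assoc vector_smult_rneg del: of_nat_Suc)
  also have "(1 / fact i) * (1 / of_nat (Suc i) * fact i) = (1 / of_nat (Suc i) :: complex)"
    by (simp del: of_nat_Suc)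
  finally show ?thesis by (simp add: vector_scalar_commute)
qed

lemma expN_poly_coeff_shift:
  assumes cp: "S *v cp = c"
  shows "(1 / of_nat (Suc i)) *s (D *v expN_poly_coeff N Y S c x i)
       = (if Suc i > N then csm (1 / of_nat (fact (Suc i))) (D ** Y ** matpow S (Suc i)) else 0) *v cp
         + (if i < N then D *v ((1 / of_nat (Suc i)) *s x i) else 0)"
proof (cases "N \<le> i")
  case True
  have "matpow S (Suc i) *v cp = matpow S i *v c"
    by (simp add: matpow_Suc_right matrix_vector_mul_assoc[symmetric] cp)
  moreover have "(1 / of_nat (Suc i)) * (1 / of_nat (fact i)) = (1 / of_nat (fact (Suc i)) :: complex)"
    by (simp add: field_simps)
  ultimately show ?thesis
    using True by (simp add: expN_poly_coeff_def csm_matrix_vector_mult vector_scalar_commute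
        vector_smult_assoc matrix_vector_mul_assoc[symmetric] del: of_nat_Suc fact_Suc)
qed (simp add: expN_poly_coeff_def vector_scalar_commute)

lemma MMN_sums:
  fixes M :: "complex \<Rightarrow> complex^'n^'n" and S :: "complex^'p^'p"
  assumes hol: "\<And>a b. (\<lambda>w. M w $ a $ b) holomorphic_on ball 0 r"
    and \<rho>: "0 \<le> \<rho>" "\<rho> < r" and bound: "\<And>m i j. norm (matpow S m $ i $ j) \<le> C * \<rho>^m"
  shows "(\<lambda>k. if k > N then csm (1 / of_nat (fact k)) (mderiv k M 0 ** Y ** matpow S k) else 0)
           sums MMN M N Y S"
proof -
  define W where "W k = (if k > N then csm (1 / of_nat (fact k)) (mderiv k M 0 ** Y ** matpow S k) else 0)"
    for k
  define tc where "tc a l k = (deriv ^^ k) (\<lambda>w. M w $ a $ l) 0 / fact k" for a l k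
  define G where "G a k = (\<Sum>m\<in>UNIV. \<Sum>l\<in>UNIV. norm (Y $ l $ m) * C * (norm (tc a l k) * \<rho>^k))" for a k
  have "C \<ge> 0" using bound[of 0] by (metis norm_ge_zero order_trans power_0 mult_1_right)
  then have G0: "G a k \<ge> 0" for a k
    unfolding G_def using \<rho> by (intro sum_nonneg mult_nonneg_nonneg) auto
  have bnd: "norm (W k $ a $ b) \<le> G a k" for k a b
  proof (cases "k > N")
    case False then show ?thesis using G0 by (simp add: W_def)
  next
    case True
    have "W k $ a $ b = (\<Sum>m\<in>UNIV. \<Sum>l\<in>UNIV. tc a l k * Y $ l $ m * matpow S k $ m $ b)"
      using True by (simp add: W_def csm_def matrix_matrix_mult_def tc_def mderiv_def
          sum_distrib_left sum_distrib_right mult_ac)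
    also have "norm \<dots> \<le> (\<Sum>m\<in>UNIV. \<Sum>l\<in>UNIV. norm (tc a l k * Y $ l $ m * matpow S k $ m $ b))"
      by (rule order_trans[OF norm_sum sum_mono[OF norm_sum]])
    also have "\<dots> \<le> G a k"
      unfolding G_def
    proof (intro sum_mono)
      fix m l
      have "norm (tc a l k * Y $ l $ m * matpow S k $ m $ b)
          = norm (tc a l k) * norm (Y $ l $ m) * norm (matpow S k $ m $ b)"
        by (simp add: norm_mult)
      also have "\<dots> \<le> norm (tc a l k) * norm (Y $ l $ m) * (C * \<rho>^k)"
        by (intro mult_left_mono bound) auto
      finally show "norm (tc a l k * Y $ l $ m * matpow S k $ m $ b)
          \<le> norm (Y $ l $ m) * C * (norm (tc a l k) * \<rho>^k)"
        by (simp add: mult_ac)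
    qed
    finally show ?thesis .
  qed
  have sG: "summable (G a)" for a
    unfolding G_def
  proof (intro summable_sum)
    fix m l
    have "summable (\<lambda>k. norm (tc a l k) * \<rho>^k)"
      unfolding tc_def by (rule summable_norm_taylor_coeffs[OF hol \<rho>])
    then show "summable (\<lambda>k. norm (Y $ l $ m) * C * (norm (tc a l k) * \<rho>^k))"
      by (rule summable_mult)
  qed
  have "summable (\<lambda>k. W k $ a $ b)" for a b
    using bnd by (intro summable_comparison_test[OF _ sG]) blast
  then have "W sums (\<chi> a b. \<Sum>k. W k $ a $ b)"
    by (intro vec_sumsI) (simp add: summable_sums)
  moreover have "MMN M N Y S = suminf W"
    unfolding MMN_def W_def ..
  ultimately show ?thesis unfolding W_def[symmetric] by (simp add: sums_iff)
qed

lemma Bterm_expN_poly_sums: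
  fixes M :: "complex \<Rightarrow> complex^'n^'n" and S :: "complex^'p^'p"
  assumes r: "r > 0" and hol: "\<And>a b. (\<lambda>w. M w $ a $ b) holomorphic_on ball 0 r"
    and \<rho>: "0 \<le> \<rho>" "\<rho> < r" and bound: "\<And>m i j. norm (matpow S m $ i $ j) \<le> C * \<rho>^m"
    and cp: "S *v cp = c"
  shows "Bterm M (vec_power_series (expN_poly_coeff N Y S c x)) sums
           - (matrix_inv (M 0) *v (MMN M N Y S *v cp
               + (\<Sum>i\<in>{1..N}. mderiv i M 0 *v ((1 / of_nat i) *s x (i - 1)))))"
proof -
  define W where "W k = (if k > N then csm (1 / of_nat (fact k)) (mderiv k M 0 ** Y ** matpow S k) else 0)"
    for k
  define X where "X i = (if i \<in> {..<N} then mderiv (Suc i) M 0 *v ((1 / of_nat (Suc i)) *s x i) else 0)"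
    for i
  have "(\<lambda>k. W k *v cp) sums (MMN M N Y S *v cp)"
    unfolding W_def by (rule matrix_vector_mult_sums[OF MMN_sums[OF hol \<rho> bound]])
  then have "(\<lambda>i. W (Suc i) *v cp) sums (MMN M N Y S *v cp)"
    by (subst sums_Suc_iff) (simp add: W_def)
  moreover have "X sums (\<Sum>i\<in>{1..N}. mderiv i M 0 *v ((1 / of_nat i) *s x (i - 1)))"
  proof -
    have "X sums (\<Sum>i\<in>{..<N}. mderiv (Suc i) M 0 *v ((1 / of_nat (Suc i)) *s x i))"
      unfolding X_def by (rule sums_If_finite_set) simp
    then show ?thesis by (simp add: sum.atLeast1_atMost_eq del: of_nat_Suc)
  qed
  ultimately have "(\<lambda>i. - (matrix_inv (M 0) *v (W (Suc i) *v cp + X i))) sums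
      - (matrix_inv (M 0) *v (MMN M N Y S *v cp
          + (\<Sum>i\<in>{1..N}. mderiv i M 0 *v ((1 / of_nat i) *s x (i - 1)))))"
    by (intro sums_minus bounded_linear.sums[OF matrix_vector_mul_bounded_linear] sums_add)
  moreover have "Bterm M (vec_power_series (expN_poly_coeff N Y S c x))
      = (\<lambda>i. - (matrix_inv (M 0) *v (W (Suc i) *v cp + X i)))"
    unfolding Bterm_vec_power_series[OF r hol summable_expN_poly_coeff] expN_poly_coeff_shift[OF cp]
    by (simp add: W_def X_def)
  ultimately show ?thesis by simp
qed

theorem mainTheorem2:
  fixes r :: real and m N :: nat
    and M :: "complex \<Rightarrow> complex^'n^'n"
    and Ms :: "nat \<Rightarrow> complex^'n^'n" and f :: "nat \<Rightarrow> complex \<Rightarrow> complex"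
    and Y :: "complex^'p^'n" and S :: "complex^'p^'p" and c :: "complex^'p"
    and x :: "nat \<Rightarrow> complex^'n" and \<phi> :: "real \<Rightarrow> complex^'n"
  assumes r_pos: "r > 0"
    and f_an: "\<And>i. i \<in> {1..m} \<Longrightarrow> f i analytic_on ball 0 r"
    and M_rep: "\<And>l. l \<in> ball 0 r \<Longrightarrow> M l = (\<Sum>i\<in>{1..m}. csm (f i l) (Ms i))"
    and M0_inv: "invertible (M 0)"
    and S_inv: "invertible S"
    and spec: "mspectrum S \<subseteq> ball 0 r"
    and phi_def: "\<And>\<theta>. \<phi> \<theta> = Y *v expNv (int N - 1) (complex_of_real \<theta>) S c
                       + (\<Sum>j<N. (complex_of_real \<theta> ^ j) *s x j)"
  shows "let cp = matrix_inv S *v c;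
             xp = (\<lambda>j. if j = 0
                     then - (matrix_inv (M 0) *v (MMN M N Y S *v cp
                              + (\<Sum>i\<in>{1..N}. mderiv i M 0 *v ((1 / of_nat i) *s x (i - 1)))))
                     else (1 / of_nat j) *s x (j - 1))
         in summable (Bterm M \<phi>) \<and>
            (\<forall>\<theta>. Bop M \<phi> \<theta> = Y *v expNv (int N) (complex_of_real \<theta>) S cp
                             + (\<Sum>j\<in>{0..N}. (complex_of_real \<theta> ^ j) *s xp j))"
proof -
  define cp where "cp = matrix_inv S *v c"
  define x0 where "x0 = - (matrix_inv (M 0) *v (MMN M N Y S *v cp
                     + (\<Sum>i\<in>{1..N}. mderiv i M 0 *v ((1 / of_nat i) *s x (i - 1)))))"
  have cp: "S *v cp = c"
    unfolding cp_def matrix_vector_mul_assoc matrix_inv_right[OF S_inv] by simp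
  have hol: "(\<lambda>w. M w $ a $ b) holomorphic_on ball 0 r" for a b
    using f_an M_rep by (rule holomorphic_entries_csm_sum)
  obtain \<rho> C where \<rho>: "0 < \<rho>" "\<rho> < r" and bound: "\<And>m i j. norm (matpow S m $ i $ j) \<le> C * \<rho>^m"
    using matpow_entry_le_geometric[OF spec r_pos] by blast
  have \<phi>: "\<phi> = vec_power_series (expN_poly_coeff N Y S c x)"
    by (rule ext) (simp only: phi_def expNv_plus_poly_eq_vec_power_series)
  have Bsum: "Bterm M \<phi> sums x0"
    unfolding \<phi> x0_def by (rule Bterm_expN_poly_sums[OF r_pos hol less_imp_le[OF \<rho>(1)] \<rho>(2) bound cp])
  show ?thesis
    unfolding Let_def cp_def[symmetric] x0_def[symmetric]
  proof (intro conjI allI)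
    show "summable (Bterm M \<phi>)" using Bsum by (rule sums_summable)
    fix \<theta>
    have "Bop M \<phi> \<theta> = oint \<phi> \<theta> + x0"
      using Bsum by (simp add: Bop_def sums_iff)
    also have "\<dots> = Y *v expNv (int N) (of_real \<theta>) S cp
        + (x0 + (\<Sum>j\<in>{1..N}. (of_real \<theta> ^ j) *s ((1 / of_nat j) *s x (j - 1))))"
      unfolding \<phi> oint_expN_poly[OF cp] by (simp only: add_ac)
    also have "x0 + (\<Sum>j\<in>{1..N}. (of_real \<theta> ^ j) *s ((1 / of_nat j) *s x (j - 1)))
        = (\<Sum>j\<in>{0..N}. (of_real \<theta> ^ j) *s (if j = 0 then x0 else (1 / of_nat j) *s x (j - 1)))"
      by (simp add: sum.atLeast_Suc_atMost)
    finally show "Bop M \<phi> \<theta> = Y *v expNv (int N) (of_real \<theta>) S cp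
        + (\<Sum>j\<in>{0..N}. (of_real \<theta> ^ j) *s (if j = 0 then x0 else (1 / of_nat j) *s x (j - 1)))" .
  qed
qed

end
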